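(* There exists $N_0=N_0(\lambda)\ge1$ such that for all $N\ge N_0$, all $\theta\in\mathcal{M}(\mathbb{R}^{d})$ with $\mathrm{diam}(\mathrm{supp}(\theta))\le1/3$, and all $n\ge N$, \[ H\Big(\theta;\frac{s_{n+N}}{s_{n+2N}}\mid\frac{s_{n}}{s_{n+2N}}\Big)\ge2H\Big(\theta;\frac{s_{n}}{s_{n+2N}}\mid\frac{s_{n-N}}{s_{n+2N}}\Big). \]
   Context: Fix $d\ge1$ and $\lambda=(\lambda_1,\dots,\lambda_d)\in(0,1)^d$ with $\lambda_1>\dots>\lambda_d$; logs are base 2. $\mathcal{M}(\mathbb{R}^d)$: compactly supported Borel probability measures. Sequence $s_n=(s_{n,1},\dots,s_{n,d})\in\mathbb{R}^d_{>0}$: for each $j$, $s_{0,j}=1$ and $s_{n+1,j}=s_{n,j}/b_{n+1,j}$, where $b_{n+1,j}$ is the unique positive integer with $s_{n,j}/b_{n+1,j}\ge\lambda_j^{n+1}>s_{n,j}/(1+b_{n+1,j})$. For $r,r'\in\mathbb{R}^d_{>0}$, $r/r'$ denotes coordinatewise division. Average entropy: for $\mu$ the law of bounded $X$ and $r\in\mathbb{R}^d_{>0}$, $H(\mu;r):=\int_{[0,1)^d}H(\lfloor X/r+x\rfloor)dx$ (coordinatewise division and floor, Shannon entropy), and $H(\mu;r\mid r'):=H(\mu;r)-H(\mu;r')$. *)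

theory Defs
  imports "HOL-Probability.Probability"
begin

definition vdiv :: "real^'n \<Rightarrow> real^'n \<Rightarrow> real^'n" where
  "vdiv r r' = (\<chi> i. r $ i / r' $ i)"

primrec s_seq :: "real^'n \<Rightarrow> nat \<Rightarrow> real^'n" where
  "s_seq lam 0 = (\<chi> j. 1)"
| "s_seq lam (Suc n) = (\<chi> j. s_seq lam n $ j /
     real (THE b::nat. 0 < b \<and> s_seq lam n $ j / real b \<ge> (lam $ j) ^ (Suc n)
                     \<and> (lam $ j) ^ (Suc n) > s_seq lam n $ j / (1 + real b)))"

definition supp :: "'a::metric_space measure \<Rightarrow> 'a set" where
  "supp \<mu> = {x. \<forall>e>0. emeasure \<mu> (ball x e) > 0}"

definition cs_prob_measures :: "('a::euclidean_space) measure set" where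
  "cs_prob_measures = {\<mu>. prob_space \<mu> \<and> sets \<mu> = sets borel \<and> compact (supp \<mu>)}"

definition floor_entropy :: "(real^'n) measure \<Rightarrow> real^'n \<Rightarrow> real^'n \<Rightarrow> real" where
  "floor_entropy \<mu> r x =
     - (\<Sum>\<^sub>\<infinity>k::int^'n. (let p = measure \<mu> {y. (\<chi> i. \<lfloor>y $ i / r $ i + x $ i\<rfloor>) = k}
                         in p * log 2 p))"

definition avg_entropy :: "(real^'n) measure \<Rightarrow> real^'n \<Rightarrow> real" where
  "avg_entropy \<mu> r =
     (LINT x : {x. \<forall>i. 0 \<le> x $ i \<and> x $ i < 1} | lborel. floor_entropy \<mu> r x)"

definition cond_avg_entropy :: "(real^'n) measure \<Rightarrow> real^'n \<Rightarrow> real^'n \<Rightarrow> real" where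
  "cond_avg_entropy \<mu> r r' = avg_entropy \<mu> r - avg_entropy \<mu> r'"

end

theory Submission
  imports Defs
begin

text \<open>All three scales \<open>s_m / s_(n+2N)\<close> with \<open>m = n-N, n, n+N\<close> are at least 1 in every
  coordinate, while the support of \<open>\<theta>\<close> lies in a cube of side 2/3. At such a scale \<open>r\<close> the
  \<open>j\<close>-th coordinate of \<open>\<lfloor>X/r + x\<rfloor>\<close> takes at most two values, and averaged over the shift
  \<open>x\<close> its entropy is exactly \<open>J_j / r_j\<close>, where \<open>J_j\<close> is the integral over \<open>c\<close> of the binary
  entropy of \<open>\<theta>{X_j \<ge> c}\<close>. Subadditivity of entropy and its monotonicity under projections
  give \<open>max_j J_j / r_j \<le> H(\<theta>; r) \<le> \<Sum>_j J_j / r_j\<close>. As \<open>\<lambda>_j^n \<le> s_(n,j) \<le> 2 \<lambda>_j^n\<close>,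
  the scale \<open>s_n / s_(n+2N)\<close> exceeds \<open>s_(n+N) / s_(n+2N)\<close> by a factor at least
  \<open>\<lambda>_j^(-N) / 2 \<ge> 3 d\<close> in every coordinate once \<open>N\<close> is large (\<open>d\<close> the dimension), so the
  entropy at the finer scale is at least three times that at the coarser one; with \<open>H \<ge> 0\<close>
  at the coarsest scale this is the claim.\<close>

section \<open>The scale sequence\<close>

lemma s_seq_step_bounds:
  fixes s L :: real
  assumes L: "0 < L" "L < 1" and s: "L ^ n \<le> s"
  defines "b \<equiv> THE b::nat. 0 < b \<and> s / real b \<ge> L ^ Suc n \<and> L ^ Suc n > s / (1 + real b)"
  shows "L ^ Suc n \<le> s / real b" "s / real b \<le> 2 * L ^ Suc n"
proof -
  let ?P = "\<lambda>b::nat. 0 < b \<and> s / real b \<ge> L ^ Suc n \<and> L ^ Suc n > s / (1 + real b)"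
  define q where "q = s / L ^ Suc n"
  have Lp: "0 < L ^ Suc n" using L by simp
  have "L ^ Suc n < L ^ n" using L by (simp add: power_strict_decreasing)
  then have q: "1 < q" unfolding q_def using s Lp by (simp add: field_simps)
  have P_iff: "?P b \<longleftrightarrow> b = nat \<lfloor>q\<rfloor>" for b
  proof
    assume Pb: "?P b"
    then have "L ^ Suc n * real b \<le> s" "s < L ^ Suc n * (1 + real b)"
      by (auto simp: field_simps)
    then have "real b \<le> q" "q < real b + 1"
      using Lp unfolding q_def by (auto simp: field_simps)
    then show "b = nat \<lfloor>q\<rfloor>" by linarith
  next
    assume "b = nat \<lfloor>q\<rfloor>"
    then have "real b \<le> q" "q < real b + 1" "0 < b" using q by (auto simp: of_nat_nat)
    then show "?P b" using Lp unfolding q_def by (simp add: field_simps)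
  qed
  have "b = nat \<lfloor>q\<rfloor>" unfolding b_def P_iff by simp
  then have Pb: "?P b" by (simp only: P_iff)
  then show "L ^ Suc n \<le> s / real b" by simp
  have "s < L ^ Suc n * (1 + real b)" using Pb by (simp add: field_simps)
  also have "\<dots> \<le> L ^ Suc n * (2 * real b)" using Pb Lp by (intro mult_left_mono) auto
  finally show "s / real b \<le> 2 * L ^ Suc n" using Pb by (simp add: field_simps)
qed

lemma s_seq_bounds:
  assumes "0 < lam $ j" "lam $ j < 1"
  shows "lam $ j ^ n \<le> s_seq lam n $ j \<and> s_seq lam n $ j \<le> 2 * lam $ j ^ n"
proof (induction n)
  case (Suc n)
  then show ?case using s_seq_step_bounds[OF assms, of n "s_seq lam n $ j"] by simp
qed simp

lemma s_seq_pos: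
  assumes "0 < lam $ j" "lam $ j < 1"
  shows "0 < s_seq lam n $ j"
  using s_seq_bounds[OF assms, of n] assms(1) by (meson less_le_trans zero_less_power)

lemma s_seq_add_le:
  assumes "0 < lam $ j" "lam $ j < 1"
  shows "s_seq lam (m + k) $ j \<le> 2 * lam $ j ^ k * s_seq lam m $ j"
proof -
  have "s_seq lam (m + k) $ j \<le> 2 * lam $ j ^ k * lam $ j ^ m"
    using s_seq_bounds[OF assms, of "m + k"] by (simp add: power_add mult_ac)
  also have "\<dots> \<le> 2 * lam $ j ^ k * s_seq lam m $ j"
    using s_seq_bounds[OF assms, of m] assms by (intro mult_left_mono) auto
  finally show ?thesis .
qed

lemma s_seq_ratio_bounds:
  fixes n N :: nat
  assumes lam: "0 < lam $ j" "lam $ j < 1" and c: "1 \<le> c" and small: "6 * c * lam $ j ^ N \<le> 1"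
  defines "r \<equiv> vdiv (s_seq lam (n + N)) (s_seq lam (n + 2 * N))"
    and "r' \<equiv> vdiv (s_seq lam n) (s_seq lam (n + 2 * N))"
  shows "1 \<le> r $ j" "3 * c * r $ j \<le> r' $ j"
proof -
  let ?s = "\<lambda>m. s_seq lam m $ j"
  have pos: "0 < ?s m" for m by (rule s_seq_pos[OF lam])
  have "2 * lam $ j ^ N \<le> 6 * c * lam $ j ^ N" using c lam by (intro mult_right_mono) auto
  then have half: "2 * lam $ j ^ N \<le> 1" using small by linarith
  have "n + 2 * N = n + N + N" by simp
  then have "?s (n + 2 * N) \<le> 2 * lam $ j ^ N * ?s (n + N)"
    using s_seq_add_le[OF lam, of "n + N" N] by metis
  also have "\<dots> \<le> ?s (n + N)" using half pos by (simp add: mult_left_le_one_le)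
  finally show "1 \<le> r $ j" unfolding r_def vdiv_def using pos by simp
  have "3 * c * ?s (n + N) \<le> 3 * c * (2 * lam $ j ^ N * ?s n)"
    using s_seq_add_le[OF lam, of n N] c by (intro mult_left_mono) auto
  also have "\<dots> = (6 * c * lam $ j ^ N) * ?s n" by (simp add: algebra_simps)
  also have "\<dots> \<le> ?s n" using small pos by (simp add: mult_left_le_one_le)
  finally have "3 * c * ?s (n + N) / ?s (n + 2 * N) \<le> ?s n / ?s (n + 2 * N)"
    using pos by (intro divide_right_mono) (auto simp: less_imp_le)
  then show "3 * c * r $ j \<le> r' $ j" unfolding r_def r'_def vdiv_def by simp
qed

lemma eventually_vec_power_le:
  fixes lam :: "real^'n::finite"
  assumes "\<forall>i. 0 < lam $ i \<and> lam $ i < 1" and "0 < \<epsilon>"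
  shows "\<forall>\<^sub>F N in sequentially. \<forall>j. lam $ j ^ N \<le> \<epsilon>"
proof (rule eventually_all_finite)
  fix j
  have "(\<lambda>N. lam $ j ^ N) \<longlonglongrightarrow> 0"
    using assms(1)[rule_format, of j] by (intro LIMSEQ_power_zero) simp
  then have "\<forall>\<^sub>F N in sequentially. lam $ j ^ N < \<epsilon>" using assms(2) by (rule order_tendstoD(2))
  then show "\<forall>\<^sub>F N in sequentially. lam $ j ^ N \<le> \<epsilon>" by eventually_elim simp
qed

section \<open>Entropy of discrete random variables\<close>

definition shannon_entropy :: "'a measure \<Rightarrow> ('a \<Rightarrow> 'b) \<Rightarrow> real" where
  "shannon_entropy M Z = - (\<Sum>\<^sub>\<infinity>k. (let p = measure M {y. Z y = k} in p * log 2 p))"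

lemma floor_entropy_eq_shannon_entropy:
  "floor_entropy \<mu> r x = shannon_entropy \<mu> (\<lambda>y. \<chi> i. \<lfloor>y $ i / r $ i + x $ i\<rfloor>)"
  by (simp add: floor_entropy_def shannon_entropy_def)

lemma neg_mult_log2_bounds:
  fixes p :: real
  assumes "0 \<le> p" "p \<le> 1"
  shows "0 \<le> - (p * log 2 p)" "- (p * log 2 p) \<le> 2"
proof -
  show "0 \<le> - (p * log 2 p)"
    using assms by (cases "p = 0") (auto simp: mult_nonneg_nonpos)
  have "- (p * ln p) \<le> 1"
  proof (cases "p = 0")
    case False
    then have p: "0 < p" using assms by simp
    have "- ln p \<le> 1 / p - 1" using ln_le_minus_one[of "1 / p"] p by (simp add: ln_div)
    then have "p * (- ln p) \<le> p * (1 / p - 1)" using p by (intro mult_left_mono) auto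
    moreover have "p * (1 / p - 1) = 1 - p" using p by (simp add: field_simps)
    ultimately show ?thesis using assms by linarith
  qed simp
  moreover have ln2: "1 / 2 < ln (2::real)" using ln2_ge_two_thirds by linarith
  ultimately have "- (p * ln p) / ln 2 \<le> 1 / (1 / 2)"
    by (intro frac_le) auto
  then show "- (p * log 2 p) \<le> 2" by (simp add: log_def)
qed

lemma shannon_entropy_nonneg:
  assumes "prob_space M"
  shows "0 \<le> shannon_entropy M Z"
proof -
  interpret prob_space M by fact
  have "0 \<le> (\<Sum>\<^sub>\<infinity>k. - (let p = measure M {y. Z y = k} in p * log 2 p))"
    using neg_mult_log2_bounds(1)[OF measure_nonneg prob_le_1]
    by (intro infsum_nonneg) (simp add: Let_def)
  then show ?thesis unfolding shannon_entropy_def infsum_uminus .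
qed

lemma shannon_entropy_eq_sum:
  assumes "prob_space M" "finite K" "AE y in M. Z y \<in> K" "\<And>k. {y. Z y = k} \<in> sets M"
  shows "shannon_entropy M Z = - (\<Sum>k\<in>K. measure M {y. Z y = k} * log 2 (measure M {y. Z y = k}))"
proof -
  interpret prob_space M by fact
  have null: "measure M {y. Z y = k} = 0" if "k \<notin> K" for k
  proof -
    have "measure M {y. Z y = k} = measure M {}"
      by (rule measure_eq_AE) (use assms(3,4) that in auto)
    then show ?thesis by simp
  qed
  have "(\<Sum>\<^sub>\<infinity>k. (let p = measure M {y. Z y = k} in p * log 2 p)) =
        (\<Sum>\<^sub>\<infinity>k\<in>K. (let p = measure M {y. Z y = k} in p * log 2 p))"
    by (rule infsum_cong_neutral) (auto simp: null)
  then show ?thesis using assms(2) by (simp add: shannon_entropy_def Let_def)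
qed

lemma shannon_entropy_AE_cong:
  assumes "AE y in M. Z y = Z' y" "\<And>k. {y. Z y = k} \<in> sets M" "\<And>k. {y. Z' y = k} \<in> sets M"
  shows "shannon_entropy M Z = shannon_entropy M Z'"
proof -
  have "measure M {y. Z y = k} = measure M {y. Z' y = k}" for k
    by (rule measure_eq_AE) (use assms in auto)
  then show ?thesis by (simp add: shannon_entropy_def)
qed

context information_space
begin

lemma simple_function_restrict:
  assumes "\<And>j. simple_function M (X j)" "finite S"
  shows "simple_function M (\<lambda>y. restrict (\<lambda>j. X j y) S)"
  using assms(2)
proof (induction S rule: finite_induct)
  case (insert i S)
  have eq: "(\<lambda>y. restrict (\<lambda>j. X j y) (insert i S)) =
        (\<lambda>(a, w). w(i := a)) \<circ> (\<lambda>y. (X i y, restrict (\<lambda>j. X j y) S))"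
    by (auto simp: fun_eq_iff)
  show ?case
    unfolding eq by (intro simple_function_compose simple_function_Pair assms(1) insert.IH)
qed simp

lemma entropy_restrict_le_sum:
  assumes sf: "\<And>j. simple_function M (X j)" and "finite S" "S \<noteq> {}"
  shows "\<H>(\<lambda>y. restrict (\<lambda>j. X j y) S) \<le> (\<Sum>j\<in>S. \<H>(X j))"
  using assms(2,3)
proof (induction S rule: finite_ne_induct)
  case (singleton i)
  have eq: "(\<lambda>y. restrict (\<lambda>j. X j y) {i}) = (\<lambda>a. (\<lambda>j. undefined)(i := a)) \<circ> X i"
    by (auto simp: fun_eq_iff)
  have "\<H>(\<lambda>y. restrict (\<lambda>j. X j y) {i}) \<le> \<H>(X i)"
    unfolding eq by (rule entropy_data_processing[OF sf])
  moreover have "(\<Sum>j\<in>{i}. \<H>(X j)) = \<H>(X i)" by simp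
  ultimately show ?case by linarith
next
  case (insert i S)
  let ?W = "\<lambda>y. restrict (\<lambda>j. X j y) S"
  have sfW: "simple_function M ?W" by (rule simple_function_restrict[OF sf \<open>finite S\<close>])
  have sfP: "simple_function M (\<lambda>y. (X i y, ?W y))" using sf sfW by simp
  have eq: "(\<lambda>y. restrict (\<lambda>j. X j y) (insert i S)) = (\<lambda>(a, w). w(i := a)) \<circ> (\<lambda>y. (X i y, ?W y))"
    by (auto simp: fun_eq_iff)
  have "\<H>(\<lambda>y. restrict (\<lambda>j. X j y) (insert i S)) \<le> \<H>(\<lambda>y. (X i y, ?W y))"
    unfolding eq by (rule entropy_data_processing[OF sfP])
  also have "\<dots> = \<H>(X i) + \<H>(?W | X i)" by (rule entropy_chain_rule[OF sf sfW])
  also have "\<dots> \<le> \<H>(X i) + (\<Sum>j\<in>S. \<H>(X j))"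
    using conditional_entropy_less_eq_entropy[OF sfW sf, of i] insert.IH by linarith
  also have "\<dots> = (\<Sum>j\<in>insert i S. \<H>(X j))" using insert.hyps by simp
  finally show ?case .
qed

lemma entropy_vec_le_sum:
  fixes X :: "'n::finite \<Rightarrow> 'a \<Rightarrow> 'c"
  assumes sf: "\<And>j. simple_function M (X j)"
  shows "\<H>(\<lambda>y. \<chi> j. X j y) \<le> (\<Sum>j\<in>UNIV. \<H>(X j))"
proof -
  have eq: "(\<lambda>y. \<chi> j. X j y) = vec_lambda \<circ> (\<lambda>y. restrict (\<lambda>j. X j y) UNIV)"
    by (auto simp: fun_eq_iff)
  have "\<H>(\<lambda>y. \<chi> j. X j y) \<le> \<H>(\<lambda>y. restrict (\<lambda>j. X j y) UNIV)"
    unfolding eq by (rule entropy_data_processing[OF simple_function_restrict[OF sf finite_class.finite_UNIV]])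
  also have "\<dots> \<le> (\<Sum>j\<in>UNIV. \<H>(X j))" by (rule entropy_restrict_le_sum[OF sf]) auto
  finally show ?thesis .
qed

lemma entropy_nth_le:
  assumes "simple_function M X"
  shows "\<H>(\<lambda>y. X y $ j) \<le> \<H>(X)"
  using entropy_data_processing[OF assms, of "\<lambda>v. v $ j"] by (simp add: comp_def)

lemma shannon_entropy_eq_entropy:
  assumes "b = 2" "space M = UNIV" and sf: "simple_function M Z"
  shows "shannon_entropy M Z = \<H>(Z)"
proof -
  have "{y. Z y = k} \<in> sets M" for k
    using simple_functionD(2)[OF sf, of "{k}"] assms(2) by (simp add: vimage_def)
  then have "shannon_entropy M Z =
      - (\<Sum>k\<in>Z ` space M. measure M {y. Z y = k} * log 2 (measure M {y. Z y = k}))"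
    by (intro shannon_entropy_eq_sum prob_space_axioms simple_functionD(1)[OF sf]) auto
  also have "\<dots> = \<H>(Z)"
    by (subst entropy_simple_distributed[OF simple_distributedI[OF sf measure_nonneg refl]])
       (simp add: assms(1,2) vimage_def)
  finally show ?thesis .
qed

text \<open>Redefining \<open>Z\<close> off the conull set \<open>B\<close> makes it a simple function, to which the
  entropy of the library applies.\<close>

lemma shannon_entropy_eq_entropy_on:
  assumes "b = 2" "space M = UNIV" and AE: "AE y in M. y \<in> B" and "B \<in> sets M" "c \<in> B"
    and fin: "finite (Z ` B)" and fibers: "\<And>k. {y. Z y = k} \<in> sets M"
  shows "simple_function M (\<lambda>y. if y \<in> B then Z y else Z c)"
    and "shannon_entropy M Z = \<H>(\<lambda>y. if y \<in> B then Z y else Z c)"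
proof -
  let ?Z = "\<lambda>y. if y \<in> B then Z y else Z c"
  have fibers': "{y. ?Z y = k} \<in> sets M" for k
  proof -
    have "{y. ?Z y = k} = (B \<inter> {y. Z y = k}) \<union> (if Z c = k then space M - B else {})"
      using assms(2) by auto
    then show ?thesis using \<open>B \<in> sets M\<close> fibers by auto
  qed
  have "?Z ` space M = Z ` B" using \<open>c \<in> B\<close> assms(2) by auto
  then show sf: "simple_function M ?Z"
    unfolding simple_function_def using fin fibers' assms(2) by (simp add: vimage_def)
  have "shannon_entropy M Z = shannon_entropy M ?Z"
    by (rule shannon_entropy_AE_cong[OF _ fibers fibers']) (use AE in auto)
  also have "\<dots> = \<H>(?Z)" by (rule shannon_entropy_eq_entropy[OF assms(1,2) sf])
  finally show "shannon_entropy M Z = \<H>(?Z)" .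
qed

end

lemma finite_vec_set:
  fixes S :: "'n::finite \<Rightarrow> 'a set"
  assumes "\<And>i. finite (S i)"
  shows "finite {k::'a^'n. \<forall>i. k $ i \<in> S i}"
proof -
  have "{k::'a^'n. \<forall>i. k $ i \<in> S i} \<subseteq> vec_lambda ` PiE UNIV S"
  proof
    fix k :: "'a^'n" assume "k \<in> {k. \<forall>i. k $ i \<in> S i}"
    then have "vec_nth k \<in> PiE UNIV S" by auto
    then show "k \<in> vec_lambda ` PiE UNIV S" by (metis image_eqI vec_nth_inverse)
  qed
  moreover have "finite (PiE UNIV S)" using assms by (intro finite_PiE) auto
  ultimately show ?thesis by (meson finite_imageI finite_subset)
qed

lemma shannon_entropy_vec_bounds:
  fixes Z :: "'n::finite \<Rightarrow> 'a \<Rightarrow> 'c"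
  assumes "prob_space M" "space M = UNIV" and AE: "AE y in M. y \<in> B" and "B \<in> sets M"
    and fin: "\<And>j. finite (Z j ` B)" and fibers: "\<And>j k. {y. Z j y = k} \<in> sets M"
  shows "shannon_entropy M (\<lambda>y. \<chi> j. Z j y) \<le> (\<Sum>j\<in>UNIV. shannon_entropy M (Z j))"
    and "shannon_entropy M (Z j) \<le> shannon_entropy M (\<lambda>y. \<chi> j. Z j y)"
proof -
  interpret prob_space M by fact
  interpret information_space M 2 by standard simp
  have "B \<noteq> {}" using AE AE_False by auto
  then obtain c where "c \<in> B" by auto
  let ?V = "\<lambda>y. \<chi> j. Z j y"
  let ?Z' = "\<lambda>j y. if y \<in> B then Z j y else Z j c"
  have "?V ` B \<subseteq> {k. \<forall>i. k $ i \<in> Z i ` B}" by auto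
  then have fin_V: "finite (?V ` B)" by (rule finite_subset) (rule finite_vec_set[OF fin])
  have fibers_V: "{y. ?V y = k} \<in> sets M" for k
  proof -
    have "{y. ?V y = k} = (\<Inter>i. {y. Z i y = k $ i})" by (auto simp: vec_eq_iff)
    then show ?thesis using fibers by auto
  qed
  note V = shannon_entropy_eq_entropy_on[OF refl assms(2) AE \<open>B \<in> sets M\<close> \<open>c \<in> B\<close> fin_V fibers_V]
  note Zj = shannon_entropy_eq_entropy_on[OF refl assms(2) AE \<open>B \<in> sets M\<close> \<open>c \<in> B\<close> fin fibers]
  have V_eq: "(\<lambda>y. if y \<in> B then ?V y else ?V c) = (\<lambda>y. \<chi> j. ?Z' j y)"
    by (auto simp: fun_eq_iff)
  show "shannon_entropy M ?V \<le> (\<Sum>j\<in>UNIV. shannon_entropy M (Z j))"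
    using entropy_vec_le_sum[OF Zj(1)] unfolding V(2) V_eq Zj(2) .
  show "shannon_entropy M (Z j) \<le> shannon_entropy M ?V"
    using entropy_nth_le[OF V(1)[unfolded V_eq], of j] unfolding V(2) V_eq Zj(2) vec_lambda_beta .
qed

section \<open>Integrals over the unit interval and the unit cube\<close>

definition unit_cube :: "(real^'n) set" where
  "unit_cube = {x. \<forall>i. 0 \<le> x $ i \<and> x $ i < 1}"

lemma avg_entropy_eq_set_integral: "avg_entropy \<theta> r = (LINT x:unit_cube|lborel. floor_entropy \<theta> r x)"
  by (simp add: avg_entropy_def unit_cube_def)

lemma unit_cube_borel [measurable]: "(unit_cube :: (real^'n::finite) set) \<in> sets borel"
proof -
  have "unit_cube = (\<Inter>i. {x::real^'n. 0 \<le> x $ i \<and> x $ i < 1})" by (auto simp: unit_cube_def)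
  also have "\<dots> \<in> sets borel" by (intro sets.finite_INT) auto
  finally show ?thesis .
qed

lemma emeasure_unit_cube_finite: "emeasure lborel (unit_cube :: (real^'n::finite) set) < \<infinity>"
proof -
  have "unit_cube \<subseteq> cbox (0::real^'n) (\<chi> i. 1)" by (auto simp: unit_cube_def mem_box_cart less_imp_le)
  then have "emeasure lborel (unit_cube :: (real^'n) set) \<le> emeasure lborel (cbox (0::real^'n) (\<chi> i. 1))"
    by (intro emeasure_mono) auto
  then show ?thesis using emeasure_lborel_cbox_finite[of "0::real^'n" "\<chi> i. 1"] by simp
qed

lemma set_integrable_unit_cube:
  fixes f :: "real^'n::finite \<Rightarrow> real"
  assumes "set_borel_measurable lborel unit_cube f" and "\<And>x. x \<in> unit_cube \<Longrightarrow> \<bar>f x\<bar> \<le> C"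
  shows "set_integrable lborel unit_cube f"
  unfolding set_integrable_def
  by (rule integrableI_bounded_set[where A=unit_cube and B=C])
     (use assms emeasure_unit_cube_finite in \<open>auto simp: set_borel_measurable_def\<close>)

lemma set_integrable_sum:
  fixes f :: "'i \<Rightarrow> 'a \<Rightarrow> real"
  assumes "\<And>i. i \<in> I \<Longrightarrow> set_integrable M A (f i)"
  shows "set_integrable M A (\<lambda>x. \<Sum>i\<in>I. f i x)"
  using assms unfolding set_integrable_def by (simp add: sum_distrib_left)

lemma set_integral_sum:
  fixes f :: "'i \<Rightarrow> 'a \<Rightarrow> real"
  assumes "\<And>i. i \<in> I \<Longrightarrow> set_integrable M A (f i)"
  shows "(LINT x:A|M. (\<Sum>i\<in>I. f i x)) = (\<Sum>i\<in>I. LINT x:A|M. f i x)"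
  using assms unfolding set_integrable_def set_lebesgue_integral_def
  by (simp add: sum_distrib_left Bochner_Integration.integral_sum)

lemma set_integral_affine_unit_interval:
  fixes f :: "real \<Rightarrow> real"
  assumes "0 < \<rho>"
  shows "(LINT t:{0..<1}|lborel. f (\<rho> * (m - t))) = (LINT s:{\<rho> * (m - 1)<..\<rho> * m}|lborel. f s) / \<rho>"
proof -
  have ind: "indicator {\<rho> * (m - 1)<..\<rho> * m} (\<rho> * m + - \<rho> * t) = (indicator {0..<1} t :: real)" for t
    using assms by (auto simp: indicator_def algebra_simps mult_less_cancel_left_pos zero_le_mult_iff)
  have "(LINT s:{\<rho> * (m - 1)<..\<rho> * m}|lborel. f s) =
      \<bar>- \<rho>\<bar> *\<^sub>R (\<integral>t. indicator {\<rho> * (m - 1)<..\<rho> * m} (\<rho> * m + - \<rho> * t) * f (\<rho> * m + - \<rho> * t) \<partial>lborel)"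
    unfolding set_lebesgue_integral_def using assms
    by (subst lborel_integral_real_affine[where c="- \<rho>" and t="\<rho> * m"]) auto
  also have "\<dots> = \<rho> * (LINT t:{0..<1}|lborel. f (\<rho> * (m - t)))"
    using assms unfolding ind set_lebesgue_integral_def by (simp add: algebra_simps)
  finally show ?thesis using assms by simp
qed

lemma Basis_vec_axis: "(Basis :: (real^'n::finite) set) = range (\<lambda>i. axis i 1)"
  by (auto simp: Basis_vec_def)

lemma sum_Basis_vec_nth:
  fixes f :: "real^'n::finite \<Rightarrow> real"
  shows "(\<Sum>b\<in>Basis. f b *\<^sub>R b) $ i = f (axis i 1)"
proof -
  have "(\<Sum>b\<in>Basis. f b *\<^sub>R b) $ i = (\<Sum>k\<in>UNIV. f (axis k 1) * axis k 1 $ i)"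
    unfolding Basis_vec_axis by (simp add: sum.reindex inj_on_def axis_eq_axis)
  also have "\<dots> = (\<Sum>k\<in>UNIV. if k = i then f (axis i 1) else 0)"
    by (rule sum.cong) (auto simp: axis_def)
  finally show ?thesis by simp
qed

lemma prod_Basis_vec: "(\<Prod>b\<in>(Basis :: (real^'n::finite) set). h b) = (\<Prod>i\<in>UNIV. h (axis i 1))"
  unfolding Basis_vec_axis by (simp add: prod.reindex inj_on_def axis_eq_axis)

text \<open>Via \<open>lborel_eq\<close>, Lebesgue measure on \<open>real^'n\<close> is the product of one-dimensional ones, and
  the integrand is a product of one factor per coordinate.\<close>

lemma set_integral_unit_cube_nth:
  fixes g :: "real \<Rightarrow> real" and j :: "'n::finite"
  assumes [measurable]: "g \<in> borel_measurable borel" and bounded: "\<And>t. \<bar>g t\<bar> \<le> C"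
  shows "(LINT x:unit_cube|lborel. g (x $ j)) = (LINT t:{0..<1}|lborel. g t)"
proof -
  interpret product_sigma_finite "\<lambda>_::real^'n. lborel :: real measure" by standard
  define T where "T = (\<lambda>f::real^'n \<Rightarrow> real. \<Sum>b\<in>Basis. f b *\<^sub>R b)"
  define F where "F = (\<lambda>(b::real^'n) s. indicator {0..<1} s * (if b = axis j 1 then g s else 1::real))"
  have cube: "(\<Prod>i\<in>UNIV. indicator {0..<1} (T f $ i) :: real) = indicator unit_cube (T f)" for f
  proof (cases "T f \<in> unit_cube")
    case False
    then obtain i where "T f $ i \<notin> {0..<1}" by (auto simp: unit_cube_def)
    then have "indicator {0..<1} (T f $ i) = (0::real)" by simp
    then have "(\<Prod>i\<in>UNIV. indicator {0..<1} (T f $ i) :: real) = 0" by (intro prod_zero) auto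
    then show ?thesis using False by simp
  qed (simp add: unit_cube_def)
  have prod_F: "(\<Prod>b\<in>Basis. F b (f b)) = indicator unit_cube (T f) * g (T f $ j)" for f
    unfolding prod_Basis_vec F_def prod.distrib T_def sum_Basis_vec_nth cube[unfolded T_def sum_Basis_vec_nth]
    by (simp add: axis_eq_axis prod.delta)
  have integrable_F: "integrable lborel (F b)" for b
    unfolding F_def
    by (rule integrableI_bounded_set[where A="{0..<1}" and B="max C 1"])
       (use bounded in \<open>auto intro: max.coboundedI1\<close>)
  have "(LINT x:unit_cube|lborel. g (x $ j)) =
      (\<integral>x. indicator unit_cube x * g (x $ j) \<partial>distr (Pi\<^sub>M Basis (\<lambda>_. lborel)) borel T)"
    unfolding set_lebesgue_integral_def T_def by (subst lborel_eq[where 'a="real^'n"]) simp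
  also have "\<dots> = (\<integral>f. (\<Prod>b\<in>Basis. F b (f b)) \<partial>Pi\<^sub>M Basis (\<lambda>_. lborel))"
    unfolding prod_F by (subst integral_distr) (auto simp: T_def)
  also have "\<dots> = (\<Prod>b\<in>Basis. (\<integral>s. F b s \<partial>lborel))"
    by (rule product_integral_prod) (auto simp: integrable_F)
  also have "\<dots> = (\<Prod>i\<in>UNIV. if i = j then (LINT t:{0..<1}|lborel. g t) else 1)"
    unfolding prod_Basis_vec
    by (rule prod.cong) (auto simp: F_def axis_eq_axis set_lebesgue_integral_def)
  also have "\<dots> = (LINT t:{0..<1}|lborel. g t)" by simp
  finally show ?thesis .
qed

section \<open>Measures supported in a box\<close>

lemma AE_in_supp:
  fixes \<theta> :: "'a::{metric_space,second_countable_topology} measure"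
  assumes "sets \<theta> = sets borel"
  shows "AE y in \<theta>. y \<in> supp \<theta>"
proof -
  define C where "C = {ball x e | x e. emeasure \<theta> (ball x e) = 0}"
  obtain D where D: "D \<subseteq> C" "countable D" "\<Union>D = \<Union>C"
    using Lindelof[of C] unfolding C_def by blast
  have "(\<Union>S\<in>D. S) \<in> null_sets \<theta>"
    using D(1,2) assms by (intro null_sets_UN') (auto simp: C_def null_sets_def)
  moreover have "{y \<in> space \<theta>. y \<notin> supp \<theta>} \<subseteq> (\<Union>S\<in>D. S)"
  proof
    fix y assume "y \<in> {y \<in> space \<theta>. y \<notin> supp \<theta>}"
    then obtain e where "0 < e" "emeasure \<theta> (ball y e) = 0"
      unfolding supp_def by (auto simp: not_gr_zero)
    then have "ball y e \<in> C" unfolding C_def by auto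
    then have "y \<in> \<Union>C" using \<open>0 < e\<close> by (meson UnionI centre_in_ball)
    then show "y \<in> (\<Union>S\<in>D. S)" using D(3) by simp
  qed
  ultimately show ?thesis by (rule AE_I')
qed

lemma AE_in_cbox_of_diameter_supp:
  fixes \<theta> :: "(real^'n::finite) measure"
  assumes "\<theta> \<in> cs_prob_measures" and diam: "diameter (supp \<theta>) \<le> \<delta>"
  obtains c where "AE y in \<theta>. y \<in> cbox (c - (\<chi> i. \<delta>)) (c + (\<chi> i. \<delta>))"
proof -
  have "prob_space \<theta>" and sets: "sets \<theta> = sets borel" and cpt: "compact (supp \<theta>)"
    using assms(1) unfolding cs_prob_measures_def by auto
  interpret prob_space \<theta> by fact
  have AE: "AE y in \<theta>. y \<in> supp \<theta>" by (rule AE_in_supp[OF sets])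
  then have "supp \<theta> \<noteq> {}" using AE_False by auto
  then obtain c where c: "c \<in> supp \<theta>" by auto
  have "y \<in> cbox (c - (\<chi> i. \<delta>)) (c + (\<chi> i. \<delta>))" if y: "y \<in> supp \<theta>" for y
  proof -
    have "\<bar>y $ i - c $ i\<bar> \<le> \<delta>" for i
    proof -
      have "\<bar>y $ i - c $ i\<bar> \<le> norm (y - c)" using component_le_norm_cart[of "y - c" i] by simp
      also have "\<dots> \<le> diameter (supp \<theta>)"
        using diameter_bounded_bound[OF compact_imp_bounded[OF cpt] y c] by (simp add: dist_norm)
      finally show ?thesis using diam by simp
    qed
    then show ?thesis by (auto simp: mem_box_cart abs_le_iff algebra_simps)
  qed
  then show ?thesis using AE by (intro that[of c]) (auto elim: eventually_mono)
qed

definition binary_entropy :: "real \<Rightarrow> real" where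
  "binary_entropy p = - (p * log 2 p) - (1 - p) * log 2 (1 - p)"

lemma binary_entropy_bounds: "0 \<le> p \<Longrightarrow> p \<le> 1 \<Longrightarrow> 0 \<le> binary_entropy p \<and> binary_entropy p \<le> 4"
  using neg_mult_log2_bounds[of p] neg_mult_log2_bounds[of "1 - p"] unfolding binary_entropy_def by auto

text \<open>The integral \<open>J_j\<close> of \<open>tail_entropy \<theta> j\<close> over \<open>c\<close> is \<open>r_j\<close> times the average entropy of
  the \<open>j\<close>-th coordinate at every scale \<open>r_j\<close> exceeding the width of the support.\<close>

definition tail_entropy :: "(real^'n) measure \<Rightarrow> 'n \<Rightarrow> real \<Rightarrow> real" where
  "tail_entropy \<theta> j c = binary_entropy (measure \<theta> {y. c \<le> y $ j})"

definition floor_entropy_nth :: "(real^'n) measure \<Rightarrow> 'n \<Rightarrow> real \<Rightarrow> real \<Rightarrow> real" where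
  "floor_entropy_nth \<theta> j \<rho> t = shannon_entropy \<theta> (\<lambda>y. \<lfloor>y $ j / \<rho> + t\<rfloor>)"

lemma finite_floor_image_cbox:
  fixes l u :: "real^'n::finite"
  assumes "0 < \<rho>"
  shows "finite ((\<lambda>y. \<lfloor>y $ j / \<rho> + t\<rfloor>) ` cbox l u)"
proof (rule finite_subset)
  show "(\<lambda>y. \<lfloor>y $ j / \<rho> + t\<rfloor>) ` cbox l u \<subseteq> {\<lfloor>l $ j / \<rho> + t\<rfloor> .. \<lfloor>u $ j / \<rho> + t\<rfloor>}"
    using assms by (auto simp: mem_box_cart intro!: floor_mono divide_right_mono)
qed simp

lemma floor_nth_mem_unit_cube:
  fixes l u x y r :: "real^'n::finite"
  assumes "0 < r $ i" "x \<in> unit_cube" "y \<in> cbox l u"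
  shows "\<lfloor>y $ i / r $ i + x $ i\<rfloor> \<in> {\<lfloor>l $ i / r $ i\<rfloor> .. \<lfloor>u $ i / r $ i\<rfloor> + 1}"
proof -
  have "l $ i / r $ i \<le> y $ i / r $ i" "y $ i / r $ i \<le> u $ i / r $ i"
    using assms by (auto simp: mem_box_cart intro!: divide_right_mono)
  moreover have "0 \<le> x $ i" "x $ i < 1" using assms(2) by (auto simp: unit_cube_def)
  ultimately have "real_of_int \<lfloor>l $ i / r $ i\<rfloor> \<le> y $ i / r $ i + x $ i"
      "y $ i / r $ i + x $ i < real_of_int \<lfloor>u $ i / r $ i\<rfloor> + 2"
    using of_int_floor_le[of "l $ i / r $ i"] real_of_int_floor_add_one_gt[of "u $ i / r $ i"]
    by linarith+
  then show ?thesis by (simp add: le_floor_iff floor_le_iff)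
qed

locale cbox_supported = prob_space \<theta> for \<theta> :: "(real^'n::finite) measure" +
  fixes l u :: "real^'n"
  assumes sets_eq_borel: "sets \<theta> = sets borel"
    and AE_in_cbox: "AE y in \<theta>. y \<in> cbox l u"
begin

lemma space_eq_UNIV: "space \<theta> = UNIV"
  using sets_eq_imp_space_eq[OF sets_eq_borel] by simp

lemma AE_nth_bounds: "AE y in \<theta>. l $ j \<le> y $ j \<and> y $ j \<le> u $ j"
  using AE_in_cbox by eventually_elim (simp add: mem_box_cart)

lemma cbox_in_sets: "cbox l u \<in> sets \<theta>"
  unfolding sets_eq_borel by (rule borel_closed) (rule closed_cbox)

lemma sets_floor_nth_fiber: "{y. \<lfloor>y $ j / \<rho> + t\<rfloor> = k} \<in> sets \<theta>"
  unfolding sets_eq_borel by measurable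

lemma sets_floor_fiber: "{y. (\<chi> i. \<lfloor>y $ i / r $ i + x $ i\<rfloor>) = k} \<in> sets \<theta>"
proof -
  have "{y. (\<chi> i. \<lfloor>y $ i / r $ i + x $ i\<rfloor>) = k} = (\<Inter>i. {y. \<lfloor>y $ i / r $ i + x $ i\<rfloor> = k $ i})"
    by (auto simp: vec_eq_iff)
  then show ?thesis using sets_floor_nth_fiber by auto
qed

lemma tail_entropy_bounds: "0 \<le> tail_entropy \<theta> j c \<and> tail_entropy \<theta> j c \<le> 4"
  unfolding tail_entropy_def by (intro binary_entropy_bounds) auto

lemma borel_measurable_tail_entropy [measurable]: "tail_entropy \<theta> j \<in> borel_measurable borel"
proof -
  have "mono (\<lambda>c. - measure \<theta> {y. c \<le> y $ j})"
    by (intro monoI le_imp_neg_le finite_measure_mono) (auto simp: sets_eq_borel)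
  then have "(\<lambda>c. - measure \<theta> {y. c \<le> y $ j}) \<in> borel_measurable borel"
    by (rule borel_measurable_mono)
  then have [measurable]: "(\<lambda>c. measure \<theta> {y. c \<le> y $ j}) \<in> borel_measurable borel"
    using borel_measurable_uminus by fastforce
  show ?thesis unfolding tail_entropy_def binary_entropy_def by measurable
qed

lemma tail_entropy_eq_0:
  assumes "c \<le> l $ j \<or> u $ j < c"
  shows "tail_entropy \<theta> j c = 0"
proof (cases "c \<le> l $ j")
  case True
  have "measure \<theta> {y. c \<le> y $ j} = measure \<theta> (space \<theta>)"
    by (rule measure_eq_AE) (use AE_nth_bounds[of j] True space_eq_UNIV sets_eq_borel in auto)
  then show ?thesis by (simp add: tail_entropy_def binary_entropy_def prob_space)
next
  case False
  then have "u $ j < c" using assms by simp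
  then have "measure \<theta> {y. c \<le> y $ j} = measure \<theta> {}"
    by (intro measure_eq_AE) (use AE_nth_bounds[of j] sets_eq_borel in auto)
  then show ?thesis by (simp add: tail_entropy_def binary_entropy_def)
qed

lemma integrable_tail_entropy: "integrable lborel (tail_entropy \<theta> j)"
proof (rule integrableI_bounded_set[where A="{l $ j .. u $ j}" and B=4])
  show "AE c in lborel. c \<notin> {l $ j .. u $ j} \<longrightarrow> tail_entropy \<theta> j c = 0"
    using tail_entropy_eq_0 by (intro AE_I2) auto
qed (use tail_entropy_bounds in \<open>auto simp: emeasure_lborel_Icc_eq\<close>)

text \<open>At a scale \<open>\<rho>\<close> not smaller than the width of the support, the \<open>j\<close>-th coordinate of
  the floor takes at most the two values \<open>m - 1\<close> and \<open>m\<close>, switching at the threshold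
  \<open>\<rho> (m - t)\<close>.\<close>

lemma floor_entropy_nth_eq_tail_entropy:
  assumes "0 < \<rho>" "u $ j - l $ j \<le> \<rho>"
  shows "floor_entropy_nth \<theta> j \<rho> t = tail_entropy \<theta> j (\<rho> * (real_of_int (\<lfloor>l $ j / \<rho> + t\<rfloor> + 1) - t))"
proof -
  define m where "m = \<lfloor>l $ j / \<rho> + t\<rfloor> + 1"
  define c where "c = \<rho> * (real_of_int m - t)"
  define Z where "Z = (\<lambda>y. \<lfloor>y $ j / \<rho> + t\<rfloor>)"
  have two_values: "Z y \<in> {m - 1, m}" and threshold: "Z y = m \<longleftrightarrow> c \<le> y $ j"
    if "l $ j \<le> y $ j" "y $ j \<le> u $ j" for y
  proof -
    have "l $ j / \<rho> \<le> y $ j / \<rho>" using that assms by (intro divide_right_mono) auto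
    moreover have "y $ j / \<rho> \<le> (l $ j + \<rho>) / \<rho>" using that assms by (intro divide_right_mono) auto
    moreover have "(l $ j + \<rho>) / \<rho> = l $ j / \<rho> + 1" using assms by (simp add: field_simps)
    moreover have "real_of_int m - 1 \<le> l $ j / \<rho> + t" "l $ j / \<rho> + t < real_of_int m"
      unfolding m_def by linarith+
    ultimately have "m - 1 \<le> Z y" "Z y \<le> m" unfolding Z_def by (simp_all add: le_floor_iff floor_le_iff)
    moreover have "m \<le> Z y \<longleftrightarrow> c \<le> y $ j"
      unfolding Z_def c_def using assms by (simp add: le_floor_iff field_simps)
    ultimately show "Z y \<in> {m - 1, m}" "Z y = m \<longleftrightarrow> c \<le> y $ j" by auto
  qed
  have fibers: "{y. Z y = k} \<in> sets \<theta>" for k unfolding Z_def sets_eq_borel by measurable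
  have tail: "{y. c \<le> y $ j} \<in> sets \<theta>" using sets_eq_borel by simp
  have "AE y in \<theta>. Z y = m \<longleftrightarrow> c \<le> y $ j"
    using AE_nth_bounds[of j] by eventually_elim (simp add: threshold)
  then have p1: "measure \<theta> {y. Z y = m} = measure \<theta> {y. c \<le> y $ j}"
    by (intro measure_eq_AE[OF _ fibers tail]) simp
  have "AE y in \<theta>. Z y = m - 1 \<longleftrightarrow> \<not> c \<le> y $ j"
    using AE_nth_bounds[of j] by eventually_elim (use two_values threshold in fastforce)
  then have "measure \<theta> {y. Z y = m - 1} = measure \<theta> (space \<theta> - {y. c \<le> y $ j})"
    by (intro measure_eq_AE[OF _ fibers sets.compl_sets[OF tail]]) (simp add: space_eq_UNIV)
  then have p0: "measure \<theta> {y. Z y = m - 1} = 1 - measure \<theta> {y. c \<le> y $ j}"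
    using prob_compl[OF tail] by simp
  have "shannon_entropy \<theta> Z = - (\<Sum>k\<in>{m - 1, m}. measure \<theta> {y. Z y = k} * log 2 (measure \<theta> {y. Z y = k}))"
  proof (rule shannon_entropy_eq_sum[OF prob_space_axioms _ _ fibers])
    show "AE y in \<theta>. Z y \<in> {m - 1, m}"
      using AE_nth_bounds[of j] by eventually_elim (use two_values in blast)
  qed simp
  also have "\<dots> = tail_entropy \<theta> j c" by (simp add: p0 p1 tail_entropy_def binary_entropy_def)
  finally show ?thesis unfolding floor_entropy_nth_def Z_def c_def m_def .
qed

lemma floor_entropy_nth_bounds:
  assumes "0 < \<rho>" "u $ j - l $ j \<le> \<rho>"
  shows "0 \<le> floor_entropy_nth \<theta> j \<rho> t \<and> floor_entropy_nth \<theta> j \<rho> t \<le> 4"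
  unfolding floor_entropy_nth_eq_tail_entropy[OF assms] by (rule tail_entropy_bounds)

lemma borel_measurable_floor_entropy_nth:
  assumes "0 < \<rho>" "u $ j - l $ j \<le> \<rho>"
  shows "floor_entropy_nth \<theta> j \<rho> \<in> borel_measurable borel"
proof -
  have "floor_entropy_nth \<theta> j \<rho> = (\<lambda>t. tail_entropy \<theta> j (\<rho> * (real_of_int (\<lfloor>l $ j / \<rho> + t\<rfloor> + 1) - t)))"
    using floor_entropy_nth_eq_tail_entropy[OF assms] by auto
  then show ?thesis by simp
qed

text \<open>For \<open>t \<in> [0, 1)\<close> the index \<open>m\<close> of \<open>floor_entropy_nth_eq_tail_entropy\<close> is \<open>k + 1\<close> or \<open>k + 2\<close>,
  and the other of the two terms below vanishes because its threshold lies outside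
  \<open>(l $ j, u $ j]\<close>.\<close>

lemma floor_entropy_nth_eq_two_shifts:
  assumes rho: "0 < \<rho>" "u $ j - l $ j \<le> \<rho>" and t: "0 \<le> t" "t < 1"
  defines "k \<equiv> \<lfloor>l $ j / \<rho>\<rfloor>"
  shows "floor_entropy_nth \<theta> j \<rho> t =
    tail_entropy \<theta> j (\<rho> * (real_of_int k + 1 - t)) + tail_entropy \<theta> j (\<rho> * (real_of_int k + 2 - t))"
proof -
  define m where "m = \<lfloor>l $ j / \<rho> + t\<rfloor> + 1"
  have "real_of_int m - 1 \<le> l $ j / \<rho> + t" "l $ j / \<rho> + t < real_of_int m"
    unfolding m_def by linarith+
  then have below: "\<rho> * (real_of_int m - 1 - t) \<le> l $ j" and "l $ j < \<rho> * (real_of_int m - t)"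
    using rho by (simp_all add: field_simps)
  then have above: "u $ j < \<rho> * (real_of_int m + 1 - t)" using rho by (simp add: algebra_simps)
  have "k \<le> \<lfloor>l $ j / \<rho> + t\<rfloor>" "\<lfloor>l $ j / \<rho> + t\<rfloor> \<le> k + 1"
    unfolding k_def using t by (auto intro: floor_mono) linarith
  then consider "m = k + 1" | "m = k + 2" unfolding m_def by linarith
  then show ?thesis
  proof cases
    case 1
    have "tail_entropy \<theta> j (\<rho> * (real_of_int k + 2 - t)) = 0"
      using above 1 by (intro tail_entropy_eq_0) (simp add: algebra_simps)
    then show ?thesis
      using 1 unfolding floor_entropy_nth_eq_tail_entropy[OF rho] m_def by (simp add: algebra_simps)
  next
    case 2
    have "tail_entropy \<theta> j (\<rho> * (real_of_int k + 1 - t)) = 0"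
      using below 2 by (intro tail_entropy_eq_0) (simp add: algebra_simps)
    then show ?thesis
      using 2 unfolding floor_entropy_nth_eq_tail_entropy[OF rho] m_def by (simp add: algebra_simps)
  qed
qed

lemma integral_tail_entropy_split:
  assumes rho: "0 < \<rho>" "u $ j - l $ j \<le> \<rho>"
  defines "k \<equiv> \<lfloor>l $ j / \<rho>\<rfloor>"
  defines "I \<equiv> \<lambda>m::int. {\<rho> * (real_of_int m - 1)<..\<rho> * real_of_int m}"
  shows "(\<integral>c. tail_entropy \<theta> j c \<partial>lborel) =
    (LINT c:I (k + 1)|lborel. tail_entropy \<theta> j c) + (LINT c:I (k + 2)|lborel. tail_entropy \<theta> j c)"
proof -
  let ?T = "tail_entropy \<theta> j"
  have pointwise: "?T c = indicator (I (k + 1)) c * ?T c + indicator (I (k + 2)) c * ?T c" for c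
  proof (cases "l $ j < c \<and> c \<le> u $ j")
    case True
    have "real_of_int k \<le> l $ j / \<rho>" "l $ j / \<rho> < real_of_int k + 1" unfolding k_def by linarith+
    then have "\<rho> * real_of_int k \<le> l $ j" "l $ j < \<rho> * real_of_int k + \<rho>"
      using rho by (simp_all add: field_simps)
    then have "c \<in> I (k + 1) \<and> c \<notin> I (k + 2) \<or> c \<notin> I (k + 1) \<and> c \<in> I (k + 2)"
      using True rho by (auto simp: I_def algebra_simps)
    then show ?thesis by (auto simp: indicator_def)
  next
    case False
    then show ?thesis using tail_entropy_eq_0[of c j] by auto
  qed
  have integrable_piece: "integrable lborel (\<lambda>c. indicator (I m) c * ?T c)" for m
    using integrable_mult_indicator[of "I m" lborel, OF _ integrable_tail_entropy] by (simp add: I_def)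
  show ?thesis
    unfolding set_lebesgue_integral_def
    by (subst pointwise) (simp add: Bochner_Integration.integral_add integrable_piece)
qed

lemma set_integral_floor_entropy_nth:
  assumes rho: "0 < \<rho>" "u $ j - l $ j \<le> \<rho>"
  shows "(LINT t:{0..<1}|lborel. floor_entropy_nth \<theta> j \<rho> t) = (\<integral>c. tail_entropy \<theta> j c \<partial>lborel) / \<rho>"
proof -
  define k where "k = \<lfloor>l $ j / \<rho>\<rfloor>"
  let ?T = "tail_entropy \<theta> j"
  have integrable_shift: "set_integrable lborel {0..<1} (\<lambda>t. ?T (\<rho> * (m - t)))" for m
    unfolding set_integrable_def
    by (rule integrableI_bounded_set[where A="{0..<1}" and B=4]) (use tail_entropy_bounds in auto)
  have "(LINT t:{0..<1}|lborel. floor_entropy_nth \<theta> j \<rho> t) =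
      (LINT t:{0..<1}|lborel. ?T (\<rho> * (real_of_int (k + 1) - t)) + ?T (\<rho> * (real_of_int (k + 2) - t)))"
    by (rule set_lebesgue_integral_cong)
       (auto simp: floor_entropy_nth_eq_two_shifts[OF rho] k_def add.commute)
  also have "\<dots> = (LINT t:{0..<1}|lborel. ?T (\<rho> * (real_of_int (k + 1) - t))) +
      (LINT t:{0..<1}|lborel. ?T (\<rho> * (real_of_int (k + 2) - t)))"
    by (rule set_integral_add(2)[OF integrable_shift integrable_shift])
  also have "\<dots> = (\<integral>c. ?T c \<partial>lborel) / \<rho>"
    unfolding integral_tail_entropy_split[OF rho] set_integral_affine_unit_interval[OF rho(1)] k_def
    by (simp add: add_divide_distrib)
  finally show ?thesis .
qed

lemma floor_entropy_le_sum_nth: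
  assumes "\<And>i. 0 < r $ i"
  shows "floor_entropy \<theta> r x \<le> (\<Sum>j\<in>UNIV. floor_entropy_nth \<theta> j (r $ j) (x $ j))"
  unfolding floor_entropy_eq_shannon_entropy floor_entropy_nth_def
  by (rule shannon_entropy_vec_bounds(1)[OF prob_space_axioms space_eq_UNIV AE_in_cbox])
     (simp_all add: cbox_in_sets finite_floor_image_cbox assms sets_floor_nth_fiber)

lemma floor_entropy_nth_le:
  assumes "\<And>i. 0 < r $ i"
  shows "floor_entropy_nth \<theta> j (r $ j) (x $ j) \<le> floor_entropy \<theta> r x"
  unfolding floor_entropy_eq_shannon_entropy floor_entropy_nth_def
  by (rule shannon_entropy_vec_bounds(2)[OF prob_space_axioms space_eq_UNIV AE_in_cbox])
     (simp_all add: cbox_in_sets finite_floor_image_cbox assms sets_floor_nth_fiber)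

lemma borel_measurable_measure_floor_fiber:
  "(\<lambda>x. measure \<theta> {y. (\<chi> i. \<lfloor>y $ i / r $ i + x $ i\<rfloor>) = k}) \<in> borel_measurable lborel"
proof -
  define Q where "Q = {p :: (real^'n) \<times> (real^'n). \<forall>i. \<lfloor>snd p $ i / r $ i + fst p $ i\<rfloor> = k $ i}"
  have sets_eq: "sets (lborel \<Otimes>\<^sub>M \<theta>) = sets (borel \<Otimes>\<^sub>M borel)"
    by (rule sets_pair_measure_cong) (simp_all add: sets_eq_borel)
  have "{p. \<lfloor>snd p $ i / r $ i + fst p $ i\<rfloor> = k $ i} \<in> sets (borel \<Otimes>\<^sub>M borel)" for i
  proof -
    have [measurable]: "(\<lambda>p::(real^'n) \<times> (real^'n). snd p $ i) \<in> borel_measurable (borel \<Otimes>\<^sub>M borel)"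
      "(\<lambda>p::(real^'n) \<times> (real^'n). fst p $ i) \<in> borel_measurable (borel \<Otimes>\<^sub>M borel)"
      by (rule measurable_compose[OF measurable_snd borel_measurable_nth],
          rule measurable_compose[OF measurable_fst borel_measurable_nth])
    have "Measurable.pred (borel \<Otimes>\<^sub>M borel) (\<lambda>p::(real^'n) \<times> (real^'n). \<lfloor>snd p $ i / r $ i + fst p $ i\<rfloor> = k $ i)"
      by measurable
    then show ?thesis by (simp add: pred_def space_pair_measure)
  qed
  moreover have "Q = (\<Inter>i. {p. \<lfloor>snd p $ i / r $ i + fst p $ i\<rfloor> = k $ i})" by (auto simp: Q_def)
  ultimately have "Q \<in> sets (lborel \<Otimes>\<^sub>M \<theta>)" unfolding sets_eq by auto
  then have "(\<lambda>x. emeasure \<theta> (Pair x -` Q)) \<in> borel_measurable lborel" by (rule measurable_emeasure_Pair)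
  moreover have "Pair x -` Q = {y. (\<chi> i. \<lfloor>y $ i / r $ i + x $ i\<rfloor>) = k}" for x
    by (auto simp: Q_def vec_eq_iff)
  ultimately show ?thesis by (simp add: measure_def)
qed

text \<open>On the unit cube the floor vectors of points of \<open>cbox l u\<close> range over a finite set \<open>K\<close>
  independent of \<open>x\<close>, so \<open>floor_entropy \<theta> r\<close> is a finite sum of measurable functions there.\<close>

lemma set_borel_measurable_floor_entropy:
  assumes r: "\<And>i. 0 < r $ i"
  shows "set_borel_measurable lborel unit_cube (floor_entropy \<theta> r)"
proof -
  define K where "K = {k::int^'n. \<forall>i. k $ i \<in> {\<lfloor>l $ i / r $ i\<rfloor> .. \<lfloor>u $ i / r $ i\<rfloor> + 1}}"
  let ?p = "\<lambda>x k. measure \<theta> {y. (\<chi> i. \<lfloor>y $ i / r $ i + x $ i\<rfloor>) = k}"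
  note [measurable] = borel_measurable_measure_floor_fiber
  have "finite K" unfolding K_def by (rule finite_vec_set) simp
  have "floor_entropy \<theta> r x = - (\<Sum>k\<in>K. ?p x k * log 2 (?p x k))" if "x \<in> unit_cube" for x
    unfolding floor_entropy_eq_shannon_entropy
  proof (rule shannon_entropy_eq_sum[OF prob_space_axioms \<open>finite K\<close> _ sets_floor_fiber])
    show "AE y in \<theta>. (\<chi> i. \<lfloor>y $ i / r $ i + x $ i\<rfloor>) \<in> K"
      using AE_in_cbox by eventually_elim (use floor_nth_mem_unit_cube[OF r that] in \<open>auto simp: K_def\<close>)
  qed
  then have "(\<lambda>x. indicator unit_cube x *\<^sub>R floor_entropy \<theta> r x) =
      (\<lambda>x. indicator unit_cube x * - (\<Sum>k\<in>K. ?p x k * log 2 (?p x k)))"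
    by (auto simp: fun_eq_iff indicator_def)
  then show ?thesis unfolding set_borel_measurable_def by simp
qed

lemma set_integrable_floor_entropy:
  assumes r: "\<And>i. 0 < r $ i" "\<And>i. u $ i - l $ i \<le> r $ i"
  shows "set_integrable lborel unit_cube (floor_entropy \<theta> r)"
proof (rule set_integrable_unit_cube[OF set_borel_measurable_floor_entropy[OF r(1)]])
  fix x
  have "floor_entropy \<theta> r x \<le> (\<Sum>j\<in>UNIV. floor_entropy_nth \<theta> j (r $ j) (x $ j))"
    by (rule floor_entropy_le_sum_nth[OF r(1)])
  also have "\<dots> \<le> (\<Sum>j\<in>(UNIV::'n set). 4)" using floor_entropy_nth_bounds r by (intro sum_mono) auto
  finally have "floor_entropy \<theta> r x \<le> 4 * real CARD('n)" by simp
  moreover have "0 \<le> floor_entropy \<theta> r x"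
    unfolding floor_entropy_eq_shannon_entropy by (rule shannon_entropy_nonneg[OF prob_space_axioms])
  ultimately show "\<bar>floor_entropy \<theta> r x\<bar> \<le> 4 * real CARD('n)" by simp
qed

lemma set_integral_floor_entropy_nth_unit_cube:
  assumes r: "0 < r $ j" "u $ j - l $ j \<le> r $ j"
  shows "set_integrable lborel unit_cube (\<lambda>x. floor_entropy_nth \<theta> j (r $ j) (x $ j))"
    and "(LINT x:unit_cube|lborel. floor_entropy_nth \<theta> j (r $ j) (x $ j)) =
      (\<integral>c. tail_entropy \<theta> j c \<partial>lborel) / r $ j"
proof -
  note [measurable] = borel_measurable_floor_entropy_nth[OF r]
  have bounded: "\<bar>floor_entropy_nth \<theta> j (r $ j) t\<bar> \<le> 4" for t
    using floor_entropy_nth_bounds[OF r] by (simp add: abs_le_iff)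
  show "set_integrable lborel unit_cube (\<lambda>x. floor_entropy_nth \<theta> j (r $ j) (x $ j))"
    by (rule set_integrable_unit_cube[OF _ bounded]) (simp add: set_borel_measurable_def)
  show "(LINT x:unit_cube|lborel. floor_entropy_nth \<theta> j (r $ j) (x $ j)) =
      (\<integral>c. tail_entropy \<theta> j c \<partial>lborel) / r $ j"
    unfolding set_integral_unit_cube_nth[OF borel_measurable_floor_entropy_nth[OF r] bounded]
    by (rule set_integral_floor_entropy_nth[OF r])
qed

lemma avg_entropy_le_sum:
  assumes r: "\<And>i. 0 < r $ i" "\<And>i. u $ i - l $ i \<le> r $ i"
  shows "avg_entropy \<theta> r \<le> (\<Sum>j\<in>UNIV. (\<integral>c. tail_entropy \<theta> j c \<partial>lborel) / r $ j)"
proof -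
  note nth = set_integral_floor_entropy_nth_unit_cube[OF r]
  have "avg_entropy \<theta> r \<le> (LINT x:unit_cube|lborel. (\<Sum>j\<in>UNIV. floor_entropy_nth \<theta> j (r $ j) (x $ j)))"
    unfolding avg_entropy_eq_set_integral
    by (rule set_integral_mono[OF set_integrable_floor_entropy[OF r] set_integrable_sum])
       (use nth(1) floor_entropy_le_sum_nth[OF r(1)] in auto)
  also have "\<dots> = (\<Sum>j\<in>UNIV. (\<integral>c. tail_entropy \<theta> j c \<partial>lborel) / r $ j)"
    using nth by (simp add: set_integral_sum)
  finally show ?thesis .
qed

lemma avg_entropy_ge_nth:
  assumes r: "\<And>i. 0 < r $ i" "\<And>i. u $ i - l $ i \<le> r $ i"
  shows "(\<integral>c. tail_entropy \<theta> j c \<partial>lborel) / r $ j \<le> avg_entropy \<theta> r"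
proof -
  note nth = set_integral_floor_entropy_nth_unit_cube[OF r(1,2)[of j]]
  have "(LINT x:unit_cube|lborel. floor_entropy_nth \<theta> j (r $ j) (x $ j)) \<le> avg_entropy \<theta> r"
    unfolding avg_entropy_eq_set_integral
    by (rule set_integral_mono[OF nth(1) set_integrable_floor_entropy[OF r]])
       (rule floor_entropy_nth_le[OF r(1)])
  then show ?thesis unfolding nth(2) .
qed

text \<open>The average entropy at scale \<open>r\<close> is squeezed between the largest and the sum of the
  \<open>d = CARD('n)\<close> terms \<open>J_j / r_j\<close>; hence enlarging every scale by the factor \<open>c d\<close>
  divides it by at least \<open>c\<close>.\<close>

lemma avg_entropy_scale_gap:
  fixes c :: real
  assumes r: "\<And>i. 0 < r $ i" "\<And>i. u $ i - l $ i \<le> r $ i"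
    and c: "1 \<le> c" and r': "\<And>i. c * real CARD('n) * r $ i \<le> r' $ i"
  shows "c * avg_entropy \<theta> r' \<le> avg_entropy \<theta> r"
proof -
  let ?J = "\<lambda>j. \<integral>c. tail_entropy \<theta> j c \<partial>lborel"
  define d where "d = real CARD('n)"
  have d: "1 \<le> d" unfolding d_def by (simp add: Suc_leI)
  have J: "0 \<le> ?J j" for j using tail_entropy_bounds by (intro Bochner_Integration.integral_nonneg) auto
  have "0 \<le> c" using c by linarith
  then have "1 * 1 \<le> c * d" using c d by (intro mult_mono) auto
  then have "r $ i \<le> c * d * r $ i" for i
    using mult_right_mono[of 1 "c * d" "r $ i"] r(1)[of i] by simp
  then have r'_bounds: "0 < r' $ i" "u $ i - l $ i \<le> r' $ i" for i
    using r[of i] r'[of i] unfolding d_def by (meson less_le_trans order_trans)+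
  have "avg_entropy \<theta> r' \<le> (\<Sum>j\<in>UNIV. ?J j / r' $ j)" by (rule avg_entropy_le_sum[OF r'_bounds])
  also have "\<dots> \<le> (\<Sum>j\<in>(UNIV::'n set). avg_entropy \<theta> r / (c * d))"
  proof (rule sum_mono)
    fix j
    have "0 < c * d * r $ j" using c d r(1)[of j] by simp
    then have "?J j / r' $ j \<le> ?J j / (c * d * r $ j)"
      using J r'[of j] unfolding d_def by (intro divide_left_mono) auto
    also have "\<dots> = (?J j / r $ j) / (c * d)" by simp
    also have "\<dots> \<le> avg_entropy \<theta> r / (c * d)"
      using avg_entropy_ge_nth[OF r] c d by (intro divide_right_mono) auto
    finally show "?J j / r' $ j \<le> avg_entropy \<theta> r / (c * d)" .
  qed
  also have "\<dots> = avg_entropy \<theta> r / c" using c d by (simp add: d_def)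
  finally show ?thesis using c by (simp add: field_simps)
qed

end

section \<open>The doubling inequality\<close>

lemma avg_entropy_nonneg: "prob_space \<theta> \<Longrightarrow> 0 \<le> avg_entropy \<theta> r"
  unfolding avg_entropy_def set_lebesgue_integral_def floor_entropy_eq_shannon_entropy
  by (intro Bochner_Integration.integral_nonneg) (simp add: shannon_entropy_nonneg)

lemma avg_entropy_doubling:
  fixes lam :: "real^'n::finite" and \<theta> :: "(real^'n) measure"
  assumes lam: "\<And>i. 0 < lam $ i" "\<And>i. lam $ i < 1" and small: "\<And>j. 6 * real CARD('n) * lam $ j ^ N \<le> 1"
    and \<theta>: "\<theta> \<in> cs_prob_measures" and diam: "diameter (supp \<theta>) \<le> 1/3"
  shows "2 * cond_avg_entropy \<theta> (vdiv (s_seq lam n) (s_seq lam (n+2*N))) (vdiv (s_seq lam m) (s_seq lam (n+2*N)))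
    \<le> cond_avg_entropy \<theta> (vdiv (s_seq lam (n+N)) (s_seq lam (n+2*N))) (vdiv (s_seq lam n) (s_seq lam (n+2*N)))"
proof -
  define r where "r = vdiv (s_seq lam (n + N)) (s_seq lam (n + 2 * N))"
  define r' where "r' = vdiv (s_seq lam n) (s_seq lam (n + 2 * N))"
  have scales: "1 \<le> r $ j" "3 * real CARD('n) * r $ j \<le> r' $ j" for j
    unfolding r_def r'_def using s_seq_ratio_bounds[OF lam _ small] by simp_all
  obtain c where "AE y in \<theta>. y \<in> cbox (c - (\<chi> i. 1/3)) (c + (\<chi> i. 1/3))"
    using AE_in_cbox_of_diameter_supp[OF \<theta> diam] .
  moreover have "prob_space \<theta>" "sets \<theta> = sets borel" using \<theta> by (simp_all add: cs_prob_measures_def)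
  ultimately interpret cbox_supported \<theta> "c - (\<chi> i. 1/3)" "c + (\<chi> i. 1/3)"
    by (intro cbox_supported.intro cbox_supported_axioms.intro)
  have "0 < r $ i" "(c + (\<chi> i. 1/3)) $ i - (c - (\<chi> i. 1/3)) $ i \<le> r $ i" for i
    using scales(1)[of i] by simp_all
  then have "3 * avg_entropy \<theta> r' \<le> avg_entropy \<theta> r"
    using scales(2) by (intro avg_entropy_scale_gap) simp_all
  moreover have "0 \<le> avg_entropy \<theta> (vdiv (s_seq lam m) (s_seq lam (n + 2 * N)))"
    by (rule avg_entropy_nonneg[OF prob_space_axioms])
  ultimately show ?thesis unfolding cond_avg_entropy_def r_def r'_def by (simp add: algebra_simps)
qed

theorem lemma3p2:
  fixes lam :: "real^('n::{finite,linorder})"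
  assumes "\<forall>i. 0 < lam $ i \<and> lam $ i < 1"
    and "\<forall>i j. i < j \<longrightarrow> lam $ j < lam $ i"
  shows "\<exists>N0::nat. N0 \<ge> 1 \<and>
    (\<forall>N \<ge> N0. \<forall>\<theta> \<in> cs_prob_measures. diameter (supp \<theta>) \<le> 1/3 \<longrightarrow>
      (\<forall>n \<ge> N.
        cond_avg_entropy \<theta> (vdiv (s_seq lam (n+N)) (s_seq lam (n+2*N)))
                             (vdiv (s_seq lam n) (s_seq lam (n+2*N)))
        \<ge> 2 * cond_avg_entropy \<theta> (vdiv (s_seq lam n) (s_seq lam (n+2*N)))
                                  (vdiv (s_seq lam (n-N)) (s_seq lam (n+2*N)))))"
proof -
  have lam: "\<And>i. 0 < lam $ i" "\<And>i. lam $ i < 1" using assms(1) by auto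
  have "0 < 1 / (6 * real CARD('n))" by simp
  then obtain N1 where N1: "\<And>N j. N1 \<le> N \<Longrightarrow> lam $ j ^ N \<le> 1 / (6 * real CARD('n))"
    using eventually_vec_power_le[OF assms(1)] unfolding eventually_sequentially by meson
  have small: "6 * real CARD('n) * lam $ j ^ N \<le> 1" if "N1 \<le> N" for N j
    using N1[OF that, of j] by (simp add: field_simps)
  show ?thesis
    by (intro exI[of _ "max N1 1"] conjI allI impI ballI avg_entropy_doubling[OF lam small]) auto
qed

end
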